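(* Let $q$ be a prime power, $r\ge 1$ an integer, and $\mathcal{S}$ a $q^r$-divisible spanning set of $q^{r+1}$ points in $\mathrm{PG}(v-1,q)$. Let $K$ be a subspace of codimension $2$ (i.e. a $(v-2)$-space) with $|\mathcal{S}\cap K|=kq^{r-1}$ for some integer $0<k<q$. Then every hyperplane $H$ containing $K$ satisfies $|\mathcal{S}\cap H|\le kq^r$.
   Context: $\mathrm{PG}(v-1,q)$ is the projective space of $\mathbb{F}_q^v$; a $k$-space is a $k$-dimensional subspace of $\mathbb{F}_q^v$ (points are $1$-spaces, hyperplanes $(v-1)$-spaces). A set $\mathcal{S}$ of points is spanning if its points span $\mathbb{F}_q^v$, and it is $q^r$-divisible if $|\mathcal{S}\cap H|\equiv|\mathcal{S}|\pmod{q^r}$ for every hyperplane $H$. *)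

theory Defs
  imports "HOL-Analysis.Analysis"
begin

text \<open>The ambient space is F_q^v, modelled as the type 'a^'n with 'a a finite field
  (q = CARD('a)) and v = CARD('n). A k-space is a k-dimensional F_q-subspace.\<close>

definition kspace :: "nat \<Rightarrow> ('a::field ^ 'n) set \<Rightarrow> bool" where
  "kspace k W \<longleftrightarrow> vec.subspace W \<and> vec.dim W = k"

definition is_point :: "('a::field ^ 'n) set \<Rightarrow> bool" where
  "is_point P \<longleftrightarrow> kspace 1 P"

definition is_hyperplane :: "('a::field ^ 'n) set \<Rightarrow> bool" where
  "is_hyperplane H \<longleftrightarrow> kspace (CARD('n) - 1) H"

definition pts_in :: "('a::field ^ 'n) set set \<Rightarrow> ('a ^ 'n) set \<Rightarrow> nat" where
  "pts_in S W = card {P \<in> S. P \<subseteq> W}"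

definition spanning :: "('a::field ^ 'n) set set \<Rightarrow> bool" where
  "spanning S \<longleftrightarrow> vec.span (\<Union>S) = UNIV"

definition divisible :: "nat \<Rightarrow> ('a::field ^ 'n) set set \<Rightarrow> bool" where
  "divisible m S \<longleftrightarrow> (\<forall>H. is_hyperplane H \<longrightarrow> pts_in S H mod m = card S mod m)"

end

theory Submission
  imports Defs
begin

text \<open>Pick \<open>a \<in> H - K\<close> and \<open>b \<notin> H\<close>; then
  the spaces \<open>W c = \<langle>K, b + c a\<rangle>\<close>, \<open>c \<in> F_q\<close>, are the \<open>q\<close> other hyperplanes through \<open>K\<close>, and any two
  of the \<open>q + 1\<close> hyperplanes through \<open>K\<close> meet exactly in \<open>K\<close>. Each \<open>W c\<close> contains the points of
  \<open>S \<inter> K\<close>, so it meets \<open>S\<close>, and by divisibility it contains at least \<open>q^r\<close> points of \<open>S\<close>,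
  hence at least \<open>q^r - k q^(r-1)\<close> outside \<open>K\<close>. Counting \<open>S\<close> over the pencil gives
  \<open>|S \<inter> H| \<le> q^(r+1) - q (q^r - k q^(r-1)) = k q^r\<close>.\<close>

definition pts_off :: "('a::field ^ 'n) set set \<Rightarrow> ('a ^ 'n) set \<Rightarrow> ('a ^ 'n) set \<Rightarrow> nat" where
  "pts_off S W K = card {P \<in> S. P \<subseteq> W \<and> \<not> P \<subseteq> K}"

lemma pts_in_mono:
  assumes "finite S" "W \<subseteq> W'"
  shows "pts_in S W \<le> pts_in S W'"
  unfolding pts_in_def using assms by (intro card_mono) auto

lemma pts_in_eq_pts_in_plus_pts_off:
  assumes "finite S" "K \<subseteq> W"
  shows "pts_in S W = pts_in S K + pts_off S W K"
proof -
  have "{P \<in> S. P \<subseteq> W} = {P \<in> S. P \<subseteq> K} \<union> {P \<in> S. P \<subseteq> W \<and> \<not> P \<subseteq> K}"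
    using assms(2) by auto
  then have "pts_in S W = card ({P \<in> S. P \<subseteq> K} \<union> {P \<in> S. P \<subseteq> W \<and> \<not> P \<subseteq> K})"
    unfolding pts_in_def by simp
  also have "\<dots> = pts_in S K + pts_off S W K"
    unfolding pts_in_def pts_off_def using assms(1) by (intro card_Un_disjoint) auto
  finally show ?thesis .
qed

lemma pts_in_plus_sum_pts_off_le:
  fixes S :: "('a::field ^ 'n) set set"
  assumes "finite S" "finite I"
    and "\<And>i. i \<in> I \<Longrightarrow> H \<inter> W i \<subseteq> K"
    and "\<And>i j. i \<in> I \<Longrightarrow> j \<in> I \<Longrightarrow> i \<noteq> j \<Longrightarrow> W i \<inter> W j \<subseteq> K"
  shows "pts_in S H + (\<Sum>i\<in>I. pts_off S (W i) K) \<le> card S"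
proof -
  define A where "A i = {P \<in> S. P \<subseteq> W i \<and> \<not> P \<subseteq> K}" for i
  have "A i \<inter> A j = {}" if "i \<in> I" "j \<in> I" "i \<noteq> j" for i j
    using assms(4)[OF that] by (auto simp: A_def)
  then have "(\<Sum>i\<in>I. card (A i)) = card (\<Union>i\<in>I. A i)"
    using assms(1,2) by (intro card_UN_disjoint[symmetric]) (auto simp: A_def)
  moreover have "{P \<in> S. P \<subseteq> H} \<inter> A i = {}" if "i \<in> I" for i
    using assms(3)[OF that] by (auto simp: A_def)
  then have "card {P \<in> S. P \<subseteq> H} + card (\<Union>i\<in>I. A i)
      = card ({P \<in> S. P \<subseteq> H} \<union> (\<Union>i\<in>I. A i))"
    using assms(1,2) by (intro card_Un_disjoint[symmetric]) (auto simp: A_def)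
  moreover have "\<dots> \<le> card S"
    using assms(1) by (intro card_mono) (auto simp: A_def)
  ultimately show ?thesis
    unfolding pts_in_def pts_off_def A_def by simp
qed

lemma divisible_pts_in_ge:
  assumes "divisible m S" "m dvd card S" "is_hyperplane W" "0 < pts_in S W"
  shows "m \<le> pts_in S W"
proof -
  have "pts_in S W mod m = card S mod m"
    using assms(1,3) unfolding divisible_def by blast
  with assms(2) have "m dvd pts_in S W"
    by (simp add: mod_eq_0_iff_dvd)
  with assms(4) show ?thesis
    by (simp add: dvd_imp_le)
qed

lemma subspace_scale_iff:
  fixes W :: "('a::field ^ 'n) set"
  assumes "vec.subspace W" "c \<noteq> 0"
  shows "c *s x \<in> W \<longleftrightarrow> x \<in> W"
  using vec.subspace_scale[OF assms(1), of "c *s x" "inverse c"] vec.subspace_scale[OF assms(1)] assms(2)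
  by auto

lemma subspace_inter_span_insert_subset:
  fixes W K :: "('a::field ^ 'n) set"
  assumes "vec.subspace W" "vec.subspace K" "K \<subseteq> W" "u \<notin> W"
  shows "W \<inter> vec.span (insert u K) \<subseteq> K"
proof
  fix x assume x: "x \<in> W \<inter> vec.span (insert u K)"
  moreover have "vec.span K = K"
    using assms(2) by simp
  ultimately obtain t where t: "x - t *s u \<in> K"
    by (auto simp: vec.span_breakdown_eq)
  have "t = 0"
  proof (rule ccontr)
    assume "t \<noteq> 0"
    have "x - (x - t *s u) \<in> W"
      using vec.subspace_diff[OF assms(1), of x "x - t *s u"] x t assms(3) by auto
    with \<open>t \<noteq> 0\<close> assms(1,4) show False
      by (simp add: subspace_scale_iff)
  qed
  with t show "x \<in> K"
    by simp
qed

lemma kspace_span_insert: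
  fixes K :: "('a::field ^ 'n) set"
  assumes "kspace m K" "u \<notin> K"
  shows "kspace (m + 1) (vec.span (insert u K))"
proof -
  have "vec.subspace K" "vec.dim K = m"
    using assms(1) by (simp_all add: kspace_def)
  moreover from \<open>vec.subspace K\<close> assms(2) have "u \<notin> vec.span K"
    using vec.span_eq_iff by blast
  ultimately show ?thesis
    unfolding kspace_def by (simp add: vec.dim_insert)
qed

lemma pencil_point_notin_span:
  fixes H K :: "('a::field ^ 'n) set"
  assumes "vec.subspace H" "vec.subspace K" "K \<subseteq> H"
    and "a \<in> H" "a \<notin> K" "b \<notin> H" "c \<noteq> d"
  shows "b + c *s a \<notin> vec.span (insert (b + d *s a) K)"
proof
  assume "b + c *s a \<in> vec.span (insert (b + d *s a) K)"
  moreover have "vec.span K = K"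
    using assms(2) by simp
  ultimately obtain t where t: "(1 - t) *s b + (c - t * d) *s a \<in> K"
    by (auto simp: vec.span_breakdown_eq vec_eq_iff algebra_simps)
  have "(1 - t) *s b + (c - t * d) *s a \<in> H"
    using t assms(3) by blast
  moreover have "(c - t * d) *s a \<in> H"
    by (rule vec.subspace_scale[OF assms(1,4)])
  ultimately have "(1 - t) *s b \<in> H"
    using vec.subspace_diff[OF assms(1)] by (metis add_diff_cancel_right')
  with assms(1,6) have "t = 1"
    using subspace_scale_iff[of H "1 - t" b] by (cases "t = 1") auto
  with t have "(c - d) *s a \<in> K"
    by simp
  with assms(2,5,7) show False
    using subspace_scale_iff[of K "c - d" a] by simp
qed

lemma hyperplane_pencil:
  fixes H K :: "('a::field ^ 'n) set"
  assumes "CARD('n) \<ge> 2" "kspace (CARD('n) - 2) K" "is_hyperplane H" "K \<subseteq> H"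
  obtains W :: "'a \<Rightarrow> ('a ^ 'n) set"
  where "\<And>c. is_hyperplane (W c)" "\<And>c. K \<subseteq> W c" "\<And>c. H \<inter> W c \<subseteq> K"
    and "\<And>c d. c \<noteq> d \<Longrightarrow> W c \<inter> W d \<subseteq> K"
proof -
  have K: "vec.subspace K" "vec.dim K = CARD('n) - 2"
    and H: "vec.subspace H" "vec.dim H = CARD('n) - 1"
    using assms(2,3) by (simp_all add: kspace_def is_hyperplane_def)
  have "\<not> H \<subseteq> K"
    using vec.dim_subset[of H K] H(2) K(2) assms(1) by auto
  then obtain a where a: "a \<in> H" "a \<notin> K"
    by blast
  have "H \<noteq> UNIV"
    using H(2) assms(1) by (auto simp: card_cart_basis)
  then obtain b where b: "b \<notin> H"
    by blast
  define W where "W c = vec.span (insert (b + c *s a) K)" for c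
  have notin_H: "b + c *s a \<notin> H" for c
    using vec.subspace_diff[OF H(1), of "b + c *s a" "c *s a"] vec.subspace_scale[OF H(1) a(1)] b
    by auto
  have K_sub: "K \<subseteq> W c" for c
    unfolding W_def using vec.span_superset by blast
  show thesis
  proof
    show "is_hyperplane (W c)" for c
    proof -
      have "b + c *s a \<notin> K"
        using notin_H assms(4) by blast
      moreover have "CARD('n) - 2 + 1 = CARD('n) - 1"
        using assms(1) by simp
      ultimately show ?thesis
        unfolding W_def is_hyperplane_def by (metis kspace_span_insert[OF assms(2)])
    qed
    show "K \<subseteq> W c" for c
      by (rule K_sub)
    show "H \<inter> W c \<subseteq> K" for c
      unfolding W_def using subspace_inter_span_insert_subset[OF H(1) K(1) assms(4) notin_H] .
    show "W c \<inter> W d \<subseteq> K" if "c \<noteq> d" for c d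
      using subspace_inter_span_insert_subset[OF vec.subspace_span K(1) K_sub[unfolded W_def]
          pencil_point_notin_span[OF H(1) K(1) assms(4) a b that]]
      unfolding W_def by blast
  qed
qed

theorem lemma1:
  fixes S :: "('a::{finite,field} ^ 'n) set set" and K :: "('a ^ 'n) set"
    and r k :: nat
  assumes "r \<ge> 1"
    and "\<forall>P\<in>S. is_point P"
    and "card S = CARD('a) ^ (r + 1)"
    and "divisible (CARD('a) ^ r) S"
    and "spanning S"
    and "CARD('n) \<ge> 2"
    and "kspace (CARD('n) - 2) K"
    and "pts_in S K = k * CARD('a) ^ (r - 1)"
    and "0 < k" and "k < CARD('a)"
  shows "\<forall>H. is_hyperplane H \<and> K \<subseteq> H \<longrightarrow> pts_in S H \<le> k * CARD('a) ^ r"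
proof (intro allI impI, elim conjE)
  fix H assume H: "is_hyperplane H" "K \<subseteq> H"
  define q where "q = CARD('a)"
  obtain W :: "'a \<Rightarrow> ('a ^ 'n) set"
    where W: "\<And>c. is_hyperplane (W c)" "\<And>c. K \<subseteq> W c" "\<And>c. H \<inter> W c \<subseteq> K"
      "\<And>c d. c \<noteq> d \<Longrightarrow> W c \<inter> W d \<subseteq> K"
    using hyperplane_pencil[OF assms(6,7) H] by blast
  have "0 < pts_in S K"
    using assms(8,9) by simp
  then have "0 < pts_in S (W c)" for c
    using pts_in_mono[OF _ W(2), of S c] by simp
  then have "q ^ r \<le> pts_in S (W c)" for c
    using divisible_pts_in_ge[OF assms(4) _ W(1)] assms(3) by (simp add: q_def le_imp_power_dvd)
  then have pencil_member_ge: "q ^ r \<le> pts_in S K + pts_off S (W c) K" for c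
    by (simp add: pts_in_eq_pts_in_plus_pts_off[OF _ W(2)])
  have "(\<Sum>c::'a\<in>UNIV. q ^ r) \<le> (\<Sum>c\<in>UNIV. pts_in S K + pts_off S (W c) K)"
    by (rule sum_mono) (rule pencil_member_ge)
  then have "q * q ^ r \<le> (\<Sum>c\<in>UNIV. pts_off S (W c) K) + q * pts_in S K"
    by (simp add: sum.distrib q_def)
  moreover have "pts_in S H + (\<Sum>c\<in>UNIV. pts_off S (W c) K) \<le> q * q ^ r"
    using pts_in_plus_sum_pts_off_le[of S UNIV H W K] W(3,4) assms(3) by (simp add: q_def)
  moreover have "q * pts_in S K = k * q ^ r"
    using assms(1,8) by (simp add: q_def power_eq_if)
  ultimately show "pts_in S H \<le> k * CARD('a) ^ r"
    by (simp add: q_def)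
qed

end
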